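(* In the setting below, every coding scheme satisfies $\mathcal{L}_{\text{total}}\ge\mathcal{L}_{\text{total,lb}}:=\sum_{i\in\{3,4\}}\sum_{j=2Z+1}^{n}\mu^{(i)}_j$ (an empty sum being $0$).
   Context: Let $n,a,b,Z$ be positive integers with $\max\{a,b\}\le n\le a+b$ and $Z\le n$. Let $x=(x_1,\dots,x_n)^\top$ be a real random vector with $\mathbb{E}[x]=0$ and positive definite covariance $\Psi=\mathbb{E}[xx^\top]$, with Cholesky decomposition $\Psi=LL^\top$ ($L$ lower triangular with positive diagonal). Let $x^{(1)}=(x_1,\dots,x_a)^\top$, $x^{(2)}=(x_{n-b+1},\dots,x_n)^\top$. A coding scheme consists of matrices $E^{(1,3)},E^{(1,5)}\in\mathbb{R}^{Z\times a}$, $E^{(2,4)},E^{(2,5)}\in\mathbb{R}^{Z\times b}$, $E^{(5,6)}\in\mathbb{R}^{Z\times 2Z}$, $D^{(3)},D^{(4)}\in\mathbb{R}^{n\times 2Z}$; set $\phi^{(1,3)}=E^{(1,3)}x^{(1)}$, $\phi^{(1,5)}=E^{(1,5)}x^{(1)}$, $\phi^{(2,4)}=E^{(2,4)}x^{(2)}$, $\phi^{(2,5)}=E^{(2,5)}x^{(2)}$, $\phi^{(5,6)}=E^{(5,6)}\begin{bmatrix}\phi^{(1,5)}\\ \phi^{(2,5)}\end{bmatrix}$, $\hat x^{(3)}=D^{(3)}\begin{bmatrix}\phi^{(1,3)}\\ \phi^{(5,6)}\end{bmatrix}$, $\hat x^{(4)}=D^{(4)}\begin{bmatrix}\phi^{(2,4)}\\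 \phi^{(5,6)}\end{bmatrix}$. For task matrices $K^{(3)}\in\mathbb{R}^{m_3\times n}$, $K^{(4)}\in\mathbb{R}^{m_4\times n}$ the overall task loss is $\mathcal{L}_{\text{total}}=\sum_{i\in\{3,4\}}\mathbb{E}\|K^{(i)}x-K^{(i)}\hat x^{(i)}\|_2^2$. For $i\in\{3,4\}$ let $S^{(i)}=L^\top K^{(i)\top}K^{(i)}L$ with eigenvalues $\mu^{(i)}_1\ge\mu^{(i)}_2\ge\dots\ge\mu^{(i)}_n$. *)

theory Defs
  imports "HOL-Probability.Probability" "Jordan_Normal_Form.Matrix" "Jordan_Normal_Form.Char_Poly"
begin

definition pos_def_mat :: "real mat \<Rightarrow> bool" where
  "pos_def_mat A \<longleftrightarrow> A \<in> carrier_mat (dim_row A) (dim_row A) \<and> A = transpose_mat A \<and>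
     (\<forall>v \<in> carrier_vec (dim_row A). v \<noteq> 0\<^sub>v (dim_row A) \<longrightarrow> v \<bullet> (A *\<^sub>v v) > 0)"

definition lower_tri_pos_diag :: "real mat \<Rightarrow> bool" where
  "lower_tri_pos_diag L \<longleftrightarrow>
     (\<forall>i < dim_row L. \<forall>j < dim_col L. i < j \<longrightarrow> L $$ (i,j) = 0) \<and>
     (\<forall>i < dim_row L. L $$ (i,i) > 0)"

definition eigenvalues_desc :: "real mat \<Rightarrow> real list \<Rightarrow> bool" where
  "eigenvalues_desc S mu \<longleftrightarrow> length mu = dim_row S \<and> sorted_wrt (\<ge>) mu \<and>
     char_poly S = (\<Prod>m\<leftarrow>mu. [:- m, 1:])"

definition first_part :: "nat \<Rightarrow> real vec \<Rightarrow> real vec" where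
  "first_part a v = vec a (\<lambda>i. v $ i)"

definition last_part :: "nat \<Rightarrow> nat \<Rightarrow> real vec \<Rightarrow> real vec" where
  "last_part n b v = vec b (\<lambda>i. v $ (n - b + i))"

definition phi56 :: "real mat \<Rightarrow> real mat \<Rightarrow> real mat \<Rightarrow> real vec \<Rightarrow> real vec \<Rightarrow> real vec" where
  "phi56 E15 E25 E56 x1 x2 = E56 *\<^sub>v ((E15 *\<^sub>v x1) @\<^sub>v (E25 *\<^sub>v x2))"

definition sq_norm_vec :: "real vec \<Rightarrow> real" where
  "sq_norm_vec v = v \<bullet> v"

end

theory Submission
  imports Defs "Jordan_Normal_Form.Schur_Decomposition"
begin

(* Both decoders see x only through a linear map x |-> C x with C of size 2Z x n: their own
   encoder's Z outputs and the Z outputs relayed by node 5. The loss of task i is therefore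
   E |K x - K D C x|^2 = |K L - (K D) (C L)|_F^2, the Frobenius distance from K L to a matrix
   whose rows lie in the row space of C L, which has dimension at most 2Z. With P the orthogonal
   projection onto that row space, this distance is at least tr ((I - P) S) for
   S = L^T K^T K L; in an orthonormal eigenbasis of S the diagonal of P lies in [0,1] and sums
   to at most 2Z, so tr ((I - P) S) is at least the sum of the n - 2Z smallest eigenvalues. *)

lemma index_mult_mat_sum:
  "i < dim_row A \<Longrightarrow> j < dim_col B \<Longrightarrow> dim_col A = dim_row B \<Longrightarrow>
    (A * B) $$ (i,j) = (\<Sum>k<dim_row B. A $$ (i,k) * B $$ (k,j))"
  by (auto simp: scalar_prod_def lessThan_atLeast0 intro!: sum.cong)

lemma transpose_smult_mat: "transpose_mat (c \<cdot>\<^sub>m A) = c \<cdot>\<^sub>m transpose_mat A"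
  by (rule eq_matI) auto

lemma smult_mat_mult_vec:
  fixes A :: "'a::comm_semiring_0 mat"
  shows "A \<in> carrier_mat m n \<Longrightarrow> v \<in> carrier_vec n \<Longrightarrow> (c \<cdot>\<^sub>m A) *\<^sub>v v = c \<cdot>\<^sub>v (A *\<^sub>v v)"
  by (rule eq_vecI) (auto simp: scalar_prod_def sum_distrib_left mult.assoc intro!: sum.cong)

lemma transpose_congruence:
  fixes W A :: "'a::comm_semiring_0 mat"
  assumes "W \<in> carrier_mat n m" "A \<in> carrier_mat n n"
  shows "transpose_mat (transpose_mat W * A * W) = transpose_mat W * transpose_mat A * W"
proof -
  have "transpose_mat (transpose_mat W * A * W) = transpose_mat W * transpose_mat (transpose_mat W * A)"
    using assms by (intro transpose_mult[of _ m n]) auto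
  also have "transpose_mat (transpose_mat W * A) = transpose_mat A * W"
    using assms by (simp add: transpose_mult[of _ m n])
  finally show ?thesis using assms by (simp add: assoc_mult_mat[of _ m n _ n _ m])
qed

definition mat_trace :: "'a::comm_monoid_add mat \<Rightarrow> 'a" where
  "mat_trace A = (\<Sum>i<dim_row A. A $$ (i,i))"

lemma mat_trace_mult_comm:
  fixes A B :: "'a::comm_semiring_0 mat"
  assumes "A \<in> carrier_mat m n" "B \<in> carrier_mat n m"
  shows "mat_trace (A * B) = mat_trace (B * A)"
proof -
  have "mat_trace (A * B) = (\<Sum>i<m. \<Sum>k<n. A $$ (i,k) * B $$ (k,i))"
    unfolding mat_trace_def using assms by (auto simp: scalar_prod_def lessThan_atLeast0 intro!: sum.cong)
  also have "\<dots> = (\<Sum>k<n. \<Sum>i<m. B $$ (k,i) * A $$ (i,k))"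
    by (subst sum.swap) (simp add: mult.commute)
  also have "\<dots> = mat_trace (B * A)"
    unfolding mat_trace_def using assms by (auto simp: scalar_prod_def lessThan_atLeast0 intro!: sum.cong)
  finally show ?thesis .
qed

lemma mat_trace_add:
  "A \<in> carrier_mat n n \<Longrightarrow> B \<in> carrier_mat n n \<Longrightarrow> mat_trace (A + B) = mat_trace A + mat_trace B"
  unfolding mat_trace_def by (auto simp: sum.distrib)

lemma mat_trace_smult:
  fixes A :: "'a::semiring_0 mat"
  shows "A \<in> carrier_mat n n \<Longrightarrow> mat_trace (c \<cdot>\<^sub>m A) = c * mat_trace A"
  unfolding mat_trace_def by (auto simp: sum_distrib_left)

lemma mat_trace_zero [simp]: "mat_trace (0\<^sub>m n n) = 0"
  unfolding mat_trace_def by auto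

lemma mat_trace_mult_transpose:
  "M \<in> carrier_mat m n \<Longrightarrow> mat_trace (M * transpose_mat M) = (\<Sum>i<m. \<Sum>j<n. (M $$ (i,j))\<^sup>2)"
  for M :: "'a::comm_semiring_1 mat"
  unfolding mat_trace_def by (auto simp: scalar_prod_def power2_eq_square lessThan_atLeast0 intro!: sum.cong)

lemma mat_trace_mult_transpose_nonneg:
  "M \<in> carrier_mat m n \<Longrightarrow> mat_trace (M * transpose_mat M) \<ge> (0 :: 'a::linordered_idom)"
  by (simp add: mat_trace_mult_transpose sum_nonneg)

lemma mat_trace_conjugate_orthogonal:
  fixes P U :: "'a::comm_ring_1 mat"
  assumes "P \<in> carrier_mat n n" "U \<in> carrier_mat n n" "U * transpose_mat U = 1\<^sub>m n"
  shows "mat_trace (transpose_mat U * P * U) = mat_trace P"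
proof -
  have "mat_trace (transpose_mat U * P * U) = mat_trace (transpose_mat U * (P * U))"
    using assms by (simp add: assoc_mult_mat[of _ n n _ n _ n])
  also have "\<dots> = mat_trace (P * U * transpose_mat U)"
    using assms by (intro mat_trace_mult_comm[of _ n n]) auto
  also have "\<dots> = mat_trace P"
    using assms by (simp add: assoc_mult_mat[of _ n n _ n _ n])
  finally show ?thesis .
qed

lemma mat_trace_mult_mat_diag:
  fixes A :: "'a::comm_semiring_1 mat"
  shows "A \<in> carrier_mat n n \<Longrightarrow> mat_trace (A * mat_diag n f) = (\<Sum>i<n. A $$ (i,i) * f i)"
  by (simp add: mat_trace_def mat_diag_mult_right)

lemma mat_trace_congruence_sum:
  fixes G S :: "'a::comm_semiring_1 mat"
  assumes G: "G \<in> carrier_mat m n" and S: "S \<in> carrier_mat n n"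
  shows "mat_trace (G * S * transpose_mat G) = (\<Sum>k<m. \<Sum>i<n. \<Sum>j<n. G $$ (k,i) * G $$ (k,j) * S $$ (i,j))"
proof -
  have "(G * S * transpose_mat G) $$ (k,k) = (\<Sum>i<n. \<Sum>j<n. G $$ (k,i) * G $$ (k,j) * S $$ (i,j))"
    if k: "k < m" for k
  proof -
    have "(G * S * transpose_mat G) $$ (k,k) = (\<Sum>j<n. (G * S) $$ (k,j) * transpose_mat G $$ (j,k))"
      using G S k by (subst index_mult_mat_sum) auto
    also have "\<dots> = (\<Sum>j<n. (\<Sum>i<n. G $$ (k,i) * S $$ (i,j)) * G $$ (k,j))"
      using G S k by (intro sum.cong refl) (subst index_mult_mat_sum, auto)
    also have "\<dots> = (\<Sum>i<n. \<Sum>j<n. G $$ (k,i) * G $$ (k,j) * S $$ (i,j))"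
      by (subst sum.swap) (simp add: sum_distrib_left sum_distrib_right mult_ac)
    finally show ?thesis .
  qed
  then show ?thesis unfolding mat_trace_def using G S by simp
qed

section \<open>Orthogonal projections\<close>

definition is_orth_proj :: "nat \<Rightarrow> 'a::comm_ring_1 mat \<Rightarrow> bool" where
  "is_orth_proj n P \<longleftrightarrow> P \<in> carrier_mat n n \<and> transpose_mat P = P \<and> P * P = P"

lemma is_orth_proj_diag_bounds:
  fixes P :: "real mat"
  assumes P: "is_orth_proj n P" and i: "i < n"
  shows "0 \<le> P $$ (i,i) \<and> P $$ (i,i) \<le> 1"
proof -
  have Pc: "P \<in> carrier_mat n n" and sym: "transpose_mat P = P" and idem: "P * P = P"
    using P unfolding is_orth_proj_def by auto
  have "P $$ (i,i) = (P * P) $$ (i,i)" using idem by simp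
  also have "\<dots> = (\<Sum>k<n. P $$ (i,k) * P $$ (k,i))"
    using Pc i by (auto simp: scalar_prod_def lessThan_atLeast0 intro!: sum.cong)
  also have "\<dots> = (\<Sum>k<n. (P $$ (i,k))\<^sup>2)"
    using sym Pc i by (intro sum.cong refl)
      (metis carrier_matD(1,2) index_transpose_mat(1) lessThan_iff power2_eq_square)
  finally have Pii: "P $$ (i,i) = (\<Sum>k<n. (P $$ (i,k))\<^sup>2)" .
  have sq: "(P $$ (i,i))\<^sup>2 \<le> P $$ (i,i)"
    by (subst (2) Pii) (rule member_le_sum, use i in auto)
  have "P $$ (i,i) \<le> 1"
  proof (rule ccontr)
    assume "\<not> P $$ (i,i) \<le> 1"
    then have "P $$ (i,i) * 1 < P $$ (i,i) * P $$ (i,i)" by (intro mult_strict_left_mono) auto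
    with sq show False by (simp add: power2_eq_square)
  qed
  moreover have "0 \<le> P $$ (i,i)" by (subst Pii) (simp add: sum_nonneg)
  ultimately show ?thesis by simp
qed

lemma is_orth_proj_complement:
  fixes P :: "'a::comm_ring_1 mat"
  assumes P: "is_orth_proj n P"
  shows "is_orth_proj n (1\<^sub>m n - P)"
proof -
  have Pc: "P \<in> carrier_mat n n" and sym: "transpose_mat P = P" and idem: "P * P = P"
    using P unfolding is_orth_proj_def by auto
  have "P * (1\<^sub>m n - P) = 0\<^sub>m n n"
    using Pc idem by (simp add: mult_minus_distrib_mat[OF Pc one_carrier_mat Pc])
  moreover have "(1\<^sub>m n - P) * (1\<^sub>m n - P) = 1\<^sub>m n * (1\<^sub>m n - P) - P * (1\<^sub>m n - P)"
    by (rule minus_mult_distrib_mat) (use Pc in auto)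
  ultimately have "(1\<^sub>m n - P) * (1\<^sub>m n - P) = 1\<^sub>m n - P"
    using Pc by (auto intro!: eq_matI)
  then show ?thesis
    using Pc sym transpose_minus[OF one_carrier_mat Pc] unfolding is_orth_proj_def by auto
qed

lemma orth_proj_gram_eq:
  fixes E X :: "'a::comm_ring_1 mat"
  assumes E: "is_orth_proj n E" and X: "X \<in> carrier_mat m n"
  shows "(X * E) * transpose_mat (X * E) = X * E * transpose_mat X"
proof -
  have Ec: "E \<in> carrier_mat n n" and sym: "transpose_mat E = E" and idem: "E * E = E"
    using E unfolding is_orth_proj_def by auto
  have "(X * E) * transpose_mat (X * E) = (X * E) * (E * transpose_mat X)"
    using transpose_mult[OF X Ec] sym by simp
  also have "\<dots> = X * (E * E) * transpose_mat X"
    using X Ec by (simp add: assoc_mult_mat[of _ m n _ n _ m] assoc_mult_mat[of _ n n _ n _ m])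
  finally show ?thesis unfolding idem .
qed

lemma orth_proj_pythagoras:
  fixes X P :: "'a::comm_ring_1 mat"
  assumes P: "is_orth_proj n P" and X: "X \<in> carrier_mat m n"
  shows "X * transpose_mat X
    = (X * P) * transpose_mat (X * P) + (X * (1\<^sub>m n - P)) * transpose_mat (X * (1\<^sub>m n - P))"
proof -
  have Pc: "P \<in> carrier_mat n n" using P unfolding is_orth_proj_def by simp
  have Mc: "1\<^sub>m n - P \<in> carrier_mat n n" using minus_carrier_mat[OF Pc] .
  have XT: "transpose_mat X \<in> carrier_mat n m" using X by simp
  have "P + (1\<^sub>m n - P) = 1\<^sub>m n" using Pc by (auto intro!: eq_matI)
  then have "X * transpose_mat X = X * (P + (1\<^sub>m n - P)) * transpose_mat X" using X by simp
  also have "\<dots> = X * P * transpose_mat X + X * (1\<^sub>m n - P) * transpose_mat X"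
    using X Pc Mc XT by (simp add: mult_add_distrib_mat[OF X Pc Mc] add_mult_distrib_mat[of _ m n])
  finally show ?thesis
    using orth_proj_gram_eq[OF P X] orth_proj_gram_eq[OF is_orth_proj_complement[OF P] X] by simp
qed

definition outer_prod :: "'a::comm_semiring_0 vec \<Rightarrow> 'a mat" where
  "outer_prod d = mat (dim_vec d) (dim_vec d) (\<lambda>(i,j). d $ i * d $ j)"

lemma outer_prod_carrier [simp]: "d \<in> carrier_vec n \<Longrightarrow> outer_prod d \<in> carrier_mat n n"
  unfolding outer_prod_def by auto

lemma transpose_outer_prod [simp]: "transpose_mat (outer_prod d) = outer_prod d"
  unfolding outer_prod_def by (rule eq_matI) (auto simp: mult.commute)

lemma mat_trace_outer_prod: "mat_trace (outer_prod d) = d \<bullet> d"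
  unfolding mat_trace_def outer_prod_def scalar_prod_def by (auto simp: lessThan_atLeast0)

lemma outer_prod_mult_vec:
  fixes d w :: "'a::comm_semiring_0 vec"
  assumes "d \<in> carrier_vec n" "w \<in> carrier_vec n"
  shows "outer_prod d *\<^sub>v w = (d \<bullet> w) \<cdot>\<^sub>v d"
  by (rule eq_vecI) (use assms in \<open>auto simp: outer_prod_def scalar_prod_def sum_distrib_left
    sum_distrib_right mult_ac intro!: sum.cong\<close>)

lemma mult_outer_prod:
  fixes M :: "'a::comm_semiring_0 mat"
  assumes "M \<in> carrier_mat m n" "d \<in> carrier_vec n"
  shows "M * outer_prod d = mat m n (\<lambda>(i,j). (M *\<^sub>v d) $ i * d $ j)"
  by (rule eq_matI) (use assms in \<open>auto simp: outer_prod_def scalar_prod_def sum_distrib_left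
    mult_ac intro!: sum.cong\<close>)

lemma is_orth_proj_add_outer_prod:
  fixes P :: "real mat"
  assumes P: "is_orth_proj n P" and d: "d \<in> carrier_vec n" "d \<noteq> 0\<^sub>v n" and Pd: "P *\<^sub>v d = 0\<^sub>v n"
  shows "is_orth_proj n (P + (1 / (d \<bullet> d)) \<cdot>\<^sub>m outer_prod d)"
proof -
  from P have Pc: "P \<in> carrier_mat n n" and sym: "transpose_mat P = P" and idem: "P * P = P"
    unfolding is_orth_proj_def by auto
  define c where "c = 1 / (d \<bullet> d)"
  define P' where "P' = P + c \<cdot>\<^sub>m outer_prod d"
  have dd: "d \<bullet> d > 0" using conjugate_square_greater_0_vec[OF d(1)] d(2) by simp
  have O: "outer_prod d \<in> carrier_mat n n" using d by simp
  have cO: "c \<cdot>\<^sub>m outer_prod d \<in> carrier_mat n n" using O by simp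
  have P'c: "P' \<in> carrier_mat n n" unfolding P'_def using Pc O by simp
  have PO: "P * outer_prod d = 0\<^sub>m n n"
    using Pd d Pc by (auto simp: mult_outer_prod intro!: eq_matI)
  have OP: "outer_prod d * P = 0\<^sub>m n n"
  proof -
    have "outer_prod d * P = transpose_mat (P * outer_prod d)"
      using transpose_mult[OF Pc O] sym by simp
    then show ?thesis using PO by simp
  qed
  have OO: "outer_prod d * outer_prod d = (d \<bullet> d) \<cdot>\<^sub>m outer_prod d"
    unfolding mult_outer_prod[OF O d(1)] outer_prod_mult_vec[OF d(1) d(1)]
    using d by (auto simp: outer_prod_def intro!: eq_matI)
  have P_P': "P * P' = P"
    unfolding P'_def by (simp add: mult_add_distrib_mat[OF Pc Pc cO] idem mult_smult_distrib[OF Pc O] PO Pc)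
  have "(c \<cdot>\<^sub>m outer_prod d) * (c \<cdot>\<^sub>m outer_prod d) = c \<cdot>\<^sub>m (c \<cdot>\<^sub>m ((d \<bullet> d) \<cdot>\<^sub>m outer_prod d))"
    by (simp add: mult_smult_assoc_mat[OF O cO] mult_smult_distrib[OF O O] OO)
  also have "\<dots> = c \<cdot>\<^sub>m outer_prod d" using dd O by (auto simp: c_def intro!: eq_matI)
  finally have "(c \<cdot>\<^sub>m outer_prod d) * P' = c \<cdot>\<^sub>m outer_prod d"
    unfolding P'_def by (simp add: mult_add_distrib_mat[OF cO Pc cO] mult_smult_assoc_mat[OF O Pc] OP cO)
  then have "P' * P' = P'"
    using add_mult_distrib_mat[OF Pc cO P'c] P_P' by (simp add: P'_def)
  moreover have "transpose_mat P' = P'"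
    unfolding P'_def using Pc O sym by (simp add: transpose_add transpose_smult_mat)
  ultimately show ?thesis using P'c unfolding is_orth_proj_def P'_def c_def by simp
qed

lemma add_outer_prod_extends_range:
  fixes P :: "real mat"
  assumes P: "is_orth_proj n P" and d: "d \<in> carrier_vec n" "d \<noteq> 0\<^sub>v n" and Pd: "P *\<^sub>v d = 0\<^sub>v n"
  defines "P' \<equiv> P + (1 / (d \<bullet> d)) \<cdot>\<^sub>m outer_prod d"
  shows "P' *\<^sub>v d = d"
    and "\<And>w. w \<in> carrier_vec n \<Longrightarrow> P *\<^sub>v w = w \<Longrightarrow> P' *\<^sub>v w = w"
    and "mat_trace P' = mat_trace P + 1"
proof -
  from P have Pc: "P \<in> carrier_mat n n" and sym: "transpose_mat P = P"
    unfolding is_orth_proj_def by auto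
  have dd: "d \<bullet> d > 0" using conjugate_square_greater_0_vec[OF d(1)] d(2) by simp
  have O: "outer_prod d \<in> carrier_mat n n" using d by simp
  have P'_mult: "P' *\<^sub>v w = P *\<^sub>v w + ((d \<bullet> w) / (d \<bullet> d)) \<cdot>\<^sub>v d" if "w \<in> carrier_vec n" for w
    unfolding P'_def using Pc O that d
    by (simp add: add_mult_distrib_mat_vec smult_mat_mult_vec[OF O] outer_prod_mult_vec smult_smult_assoc)
  show "P' *\<^sub>v d = d" using P'_mult[OF d(1)] Pd dd d(1) by simp
  show "P' *\<^sub>v w = w" if w: "w \<in> carrier_vec n" and Pw: "P *\<^sub>v w = w" for w
  proof -
    \<comment> \<open>w lies in the range of P, which is orthogonal to the kernel vector d\<close>
    have "d \<bullet> w = (transpose_mat P *\<^sub>v d) \<bullet> w"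
      using transpose_vec_mult_scalar[OF Pc w d(1)] Pw sym by (simp add: comm_scalar_prod[of _ n])
    then have "d \<bullet> w = 0" using sym Pd w by simp
    then show ?thesis using P'_mult[OF w] Pw w d(1) by (auto intro!: eq_vecI)
  qed
  show "mat_trace P' = mat_trace P + 1"
    unfolding P'_def using Pc O dd by (simp add: mat_trace_add mat_trace_smult mat_trace_outer_prod)
qed

lemma orth_proj_fixing_vectors_exists:
  fixes vs :: "real vec list"
  assumes "set vs \<subseteq> carrier_vec n"
  shows "\<exists>P. is_orth_proj n P \<and> (\<forall>v\<in>set vs. P *\<^sub>v v = v) \<and> mat_trace P \<le> length vs"
  using assms
proof (induction vs)
  case Nil
  show ?case by (rule exI[of _ "0\<^sub>m n n"]) (auto simp: is_orth_proj_def)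
next
  case (Cons v vs)
  then obtain P where P: "is_orth_proj n P" and fix_vs: "\<forall>w\<in>set vs. P *\<^sub>v w = w"
    and trP: "mat_trace P \<le> length vs" and v: "v \<in> carrier_vec n" by auto
  have Pc: "P \<in> carrier_mat n n" and idem: "P * P = P" using P unfolding is_orth_proj_def by auto
  define d where "d = v - P *\<^sub>v v"
  have d: "d \<in> carrier_vec n" using v Pc unfolding d_def by simp
  have v_split: "v = d + P *\<^sub>v v" unfolding d_def using Pc v by auto
  have Pd: "P *\<^sub>v d = 0\<^sub>v n"
    unfolding d_def using Pc v
    by (simp add: mult_minus_distrib_mat_vec assoc_mult_mat_vec[symmetric, of P n n P] idem)
  show ?case
  proof (cases "d = 0\<^sub>v n")
    case True
    then have "P *\<^sub>v v = v" using v_split Pc v by simp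
    then show ?thesis using P fix_vs trP by (intro exI[of _ P]) auto
  next
    case False
    let ?P' = "P + (1 / (d \<bullet> d)) \<cdot>\<^sub>m outer_prod d"
    have P': "is_orth_proj n ?P'" by (rule is_orth_proj_add_outer_prod[OF P d False Pd])
    note range = add_outer_prod_extends_range[OF P d False Pd]
    have P'c: "?P' \<in> carrier_mat n n" using P' by (simp add: is_orth_proj_def)
    have "P *\<^sub>v (P *\<^sub>v v) = P *\<^sub>v v"
      using Pc v by (simp add: assoc_mult_mat_vec[symmetric, of P n n P] idem)
    then have "?P' *\<^sub>v (P *\<^sub>v v) = P *\<^sub>v v" using range(2) Pc v by simp
    then have "?P' *\<^sub>v v = v"
      using v_split range(1) mult_add_distrib_mat_vec[OF P'c d, of "P *\<^sub>v v"] Pc v by simp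
    then show ?thesis using P' range(2,3) fix_vs trP Cons.prems by (intro exI[of _ ?P']) auto
  qed
qed

section \<open>Orthogonal diagonalization of real symmetric matrices\<close>

definition is_orthogonal_mat :: "nat \<Rightarrow> 'a::comm_ring_1 mat \<Rightarrow> bool" where
  "is_orthogonal_mat n U \<longleftrightarrow> U \<in> carrier_mat n n \<and> transpose_mat U * U = 1\<^sub>m n"

lemma is_orthogonal_mat_right_inverse:
  fixes U :: "'a::field mat"
  shows "is_orthogonal_mat n U \<Longrightarrow> U * transpose_mat U = 1\<^sub>m n"
  unfolding is_orthogonal_mat_def by (auto intro: mat_mult_left_right_inverse)

lemma is_orthogonal_mat_mult:
  assumes U: "is_orthogonal_mat n U" and V: "is_orthogonal_mat n V"
  shows "is_orthogonal_mat n (U * V)"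
proof -
  have Uc: "U \<in> carrier_mat n n" and Vc: "V \<in> carrier_mat n n"
    using U V unfolding is_orthogonal_mat_def by auto
  have "transpose_mat (U * V) * (U * V) = transpose_mat V * ((transpose_mat U * U) * V)"
    using Uc Vc by (simp add: transpose_mult assoc_mult_mat[of _ n n _ n _ n])
  then show ?thesis using U V Uc Vc unfolding is_orthogonal_mat_def by simp
qed

lemma is_orth_proj_congruence:
  fixes P U :: "'a::field mat"
  assumes P: "is_orth_proj n P" and U: "is_orthogonal_mat n U"
  shows "is_orth_proj n (transpose_mat U * P * U)"
proof -
  have Pc: "P \<in> carrier_mat n n" and Uc: "U \<in> carrier_mat n n"
    using P U unfolding is_orth_proj_def is_orthogonal_mat_def by auto
  have "transpose_mat U * P * U * (transpose_mat U * P * U)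
      = transpose_mat U * P * (U * transpose_mat U) * P * U"
    using Pc Uc by (simp add: assoc_mult_mat[of _ n n _ n _ n])
  also have "\<dots> = transpose_mat U * P * U"
    using P Pc Uc is_orthogonal_mat_right_inverse[OF U]
    by (simp add: is_orth_proj_def assoc_mult_mat[of _ n n _ n _ n])
  finally show ?thesis
    using P Pc Uc transpose_congruence[OF Uc Pc] unfolding is_orth_proj_def by simp
qed

lemma orthogonal_congruence_complement:
  fixes U P :: "'a::comm_ring_1 mat"
  assumes U: "is_orthogonal_mat n U" and P: "P \<in> carrier_mat n n"
  shows "transpose_mat U * (1\<^sub>m n - P) * U = 1\<^sub>m n - transpose_mat U * P * U"
proof -
  have Uc: "U \<in> carrier_mat n n" using U unfolding is_orthogonal_mat_def by simp
  have "transpose_mat U * (1\<^sub>m n - P) = transpose_mat U - transpose_mat U * P"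
    using mult_minus_distrib_mat[of "transpose_mat U" n n "1\<^sub>m n" n P] Uc P by simp
  then show ?thesis
    using U Uc P unfolding is_orthogonal_mat_def by (simp add: minus_mult_distrib_mat[of _ n n _ U n])
qed

lemma corthogonal_normalized_orthonormal:
  fixes ws :: "real vec list"
  assumes ws: "set ws \<subseteq> carrier_vec n" "corthogonal ws" and ij: "i < length ws" "j < length ws"
  defines "us \<equiv> map (\<lambda>w. (1 / sqrt (w \<bullet> w)) \<cdot>\<^sub>v w) ws"
  shows "us ! i \<bullet> (us ! j :: real vec) = (if i = j then 1 else 0)"
proof -
  have ws_orth: "ws ! k \<bullet> ws ! l = 0 \<longleftrightarrow> k \<noteq> l" if "k < length ws" "l < length ws" for k l
    using corthogonalD[OF ws(2) that] by simp
  have pos: "ws ! k \<bullet> ws ! k > 0" if "k < length ws" for k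
    using conjugate_square_ge_0_vec[of "ws ! k"] ws_orth[OF that that] by (simp add: order_less_le)
  have "ws ! i \<in> carrier_vec n" "ws ! j \<in> carrier_vec n" using ws(1) ij by auto
  then have "us ! i \<bullet> us ! j
      = 1 / sqrt (ws ! i \<bullet> ws ! i) * (1 / sqrt (ws ! j \<bullet> ws ! j)) * (ws ! i \<bullet> ws ! j)"
    using ij by (simp add: us_def smult_scalar_prod_distrib[of _ n] scalar_prod_smult_distrib[of _ n])
  then show ?thesis using ws_orth[OF ij] pos[OF ij(1)]
    by (cases "i = j") (auto simp: real_sqrt_mult[symmetric])
qed

lemma orthonormal_basis_extension:
  fixes v :: "real vec"
  assumes v: "v \<in> carrier_vec n" and v0: "v \<noteq> 0\<^sub>v n"
  shows "\<exists>W. is_orthogonal_mat n W \<and> col W 0 = (1 / sqrt (v \<bullet> v)) \<cdot>\<^sub>v v"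
proof -
  interpret cof_vec_space n "TYPE(real)" .
  define b where "b = basis_completion v"
  from basis_completion[OF v v0, folded b_def]
  have b: "set b \<subseteq> carrier_vec n" "distinct b" "\<not> lin_dep (set b)" "hd b = v" "length b = n"
    by auto
  have "n \<noteq> 0" using v v0 by auto
  with b obtain vs where bv: "b = v # vs" by (cases b) auto
  define ws where "ws = gram_schmidt n b"
  from gram_schmidt_result[OF b(1-3) refl, folded ws_def]
  have ws: "set ws \<subseteq> carrier_vec n" "corthogonal ws" "length ws = n" by (auto simp: b(5))
  have "hd ws = v" using gram_schmidt_hd[OF v, of vs] unfolding ws_def bv .
  then have ws0: "ws ! 0 = v" using ws(3) \<open>n \<noteq> 0\<close> by (metis hd_conv_nth list.size(3))
  define us where "us = map (\<lambda>w. (1 / sqrt (w \<bullet> w)) \<cdot>\<^sub>v w) ws"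
  define W where "W = mat_of_cols n us"
  have col_W: "col W i = us ! i" if "i < n" for i
  proof -
    have "us ! i \<in> carrier_vec n" using that ws by (auto simp: us_def)
    then show ?thesis using that ws(3) by (simp add: W_def us_def col_mat_of_cols)
  qed
  have "is_orthogonal_mat n W"
    unfolding is_orthogonal_mat_def using ws col_W corthogonal_normalized_orthonormal[OF ws(1,2)]
    by (auto simp: W_def us_def intro!: eq_matI)
  moreover have "col W 0 = (1 / sqrt (v \<bullet> v)) \<cdot>\<^sub>v v"
    using col_W[of 0] \<open>n \<noteq> 0\<close> ws0 ws(3) by (simp add: us_def)
  ultimately show ?thesis by blast
qed

lemma orthogonal_mat_eigenvector_col_exists:
  fixes A :: "real mat"
  assumes A: "A \<in> carrier_mat n n" and e: "eigenvalue A e"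
  shows "\<exists>W. is_orthogonal_mat n W \<and> A *\<^sub>v col W 0 = e \<cdot>\<^sub>v col W 0"
proof -
  obtain v where v: "v \<in> carrier_vec n" "v \<noteq> 0\<^sub>v n" "A *\<^sub>v v = e \<cdot>\<^sub>v v"
    using A e unfolding eigenvalue_def eigenvector_def by auto
  obtain W where W: "is_orthogonal_mat n W" and W0: "col W 0 = (1 / sqrt (v \<bullet> v)) \<cdot>\<^sub>v v"
    using orthonormal_basis_extension[OF v(1,2)] by blast
  have "A *\<^sub>v col W 0 = e \<cdot>\<^sub>v col W 0"
    unfolding W0 using A v by (simp add: mult_mat_vec smult_smult_assoc mult.commute)
  with W show ?thesis by blast
qed

lemma col_orthogonal_congruence_eigenvector:
  fixes A W :: "'a::field mat"
  assumes A: "A \<in> carrier_mat n n" and W: "is_orthogonal_mat n W" and n: "0 < n"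
    and eig: "A *\<^sub>v col W 0 = e \<cdot>\<^sub>v col W 0"
  shows "col (transpose_mat W * A * W) 0 = e \<cdot>\<^sub>v unit_vec n 0"
proof -
  have Wc: "W \<in> carrier_mat n n" and WW: "transpose_mat W * W = 1\<^sub>m n"
    using W unfolding is_orthogonal_mat_def by auto
  have cW: "col W 0 \<in> carrier_vec n" using Wc by (simp add: carrier_vecI)
  have "col (transpose_mat W * A * W) 0 = (transpose_mat W * A) *\<^sub>v col W 0"
    by (rule col_mult2) (use Wc A n in auto)
  also have "\<dots> = transpose_mat W *\<^sub>v (A *\<^sub>v col W 0)"
    by (rule assoc_mult_mat_vec) (use Wc A cW in auto)
  also have "\<dots> = e \<cdot>\<^sub>v (transpose_mat W *\<^sub>v col W 0)"
    unfolding eig by (rule mult_mat_vec) (use Wc cW in auto)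
  also have "transpose_mat W *\<^sub>v col W 0 = col (transpose_mat W * W) 0"
    by (rule col_mult2[symmetric]) (use Wc n in auto)
  also have "\<dots> = unit_vec n 0" using WW n by simp
  finally show ?thesis .
qed

lemma symmetric_mat_first_col_block:
  fixes A :: "'a::comm_ring_1 mat"
  assumes A: "A \<in> carrier_mat (Suc n) (Suc n)" "transpose_mat A = A"
    and col0: "col A 0 = e \<cdot>\<^sub>v unit_vec (Suc n) 0"
  shows "\<exists>A3 \<in> carrier_mat n n. transpose_mat A3 = A3 \<and>
    A = four_block_mat (mat 1 1 (\<lambda>_. e)) (0\<^sub>m 1 n) (0\<^sub>m n 1) A3"
proof -
  have c0: "A $$ (i, 0) = (if i = 0 then e else 0)" if "i < Suc n" for i
  proof -
    have "A $$ (i, 0) = col A 0 $ i" using that A by simp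
    then show ?thesis using that by (simp add: col0 unit_vec_def)
  qed
  have r0: "A $$ (0, j) = (if j = 0 then e else 0)" if "j < Suc n" for j
    using c0[OF that] A that by (metis carrier_matD index_transpose_mat(1) zero_less_Suc)
  define A3 where "A3 = mat n n (\<lambda>(i,j). A $$ (Suc i, Suc j))"
  have "A = four_block_mat (mat 1 1 (\<lambda>_. e)) (0\<^sub>m 1 n) (0\<^sub>m n 1) A3"
  proof (rule eq_matI)
    fix i j assume "i < dim_row (four_block_mat (mat 1 1 (\<lambda>_. e)) (0\<^sub>m 1 n) (0\<^sub>m n 1) A3)"
      and "j < dim_col (four_block_mat (mat 1 1 (\<lambda>_. e)) (0\<^sub>m 1 n) (0\<^sub>m n 1) A3)"
    then have "i < Suc n" "j < Suc n" by (auto simp: A3_def)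
    then show "A $$ (i, j) = four_block_mat (mat 1 1 (\<lambda>_. e)) (0\<^sub>m 1 n) (0\<^sub>m n 1) A3 $$ (i, j)"
      using c0 r0 by (cases i; cases j) (auto simp: A3_def)
  qed (use A in \<open>auto simp: A3_def\<close>)
  moreover have "transpose_mat A3 = A3"
  proof (rule eq_matI)
    fix i j assume ij: "i < dim_row A3" "j < dim_col A3"
    then have "A $$ (Suc j, Suc i) = A $$ (Suc i, Suc j)"
      using A by (metis A3_def Suc_less_eq carrier_matD dim_col_mat(1) dim_row_mat(1)
        index_transpose_mat(1))
    then show "transpose_mat A3 $$ (i, j) = A3 $$ (i, j)" using ij by (auto simp: A3_def)
  qed (auto simp: A3_def)
  ultimately show ?thesis by (intro bexI[of _ A3]) (auto simp: A3_def)
qed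

lemma char_poly_deflated_block:
  fixes A W A3 :: "'a::field mat"
  assumes A: "A \<in> carrier_mat n n" and W: "is_orthogonal_mat n W" and A3: "A3 \<in> carrier_mat n1 n1"
    and blk: "transpose_mat W * A * W = four_block_mat (mat 1 1 (\<lambda>_. e)) (0\<^sub>m 1 n1) (0\<^sub>m n1 1) A3"
    and cp: "char_poly A = [:-e, 1:] * p"
  shows "char_poly A3 = p"
proof -
  have Wc: "W \<in> carrier_mat n n" using W unfolding is_orthogonal_mat_def by simp
  have "similar_mat (transpose_mat W * A * W) A"
    unfolding similar_mat_def
    by (rule exI[of _ "transpose_mat W"], rule exI[of _ W], rule similar_mat_witI[of _ _ n])
      (use W Wc A is_orthogonal_mat_right_inverse[OF W] in \<open>auto simp: is_orthogonal_mat_def\<close>)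
  then have "char_poly (mat 1 1 (\<lambda>_. e)) * char_poly A3 = [:-e, 1:] * p"
    using char_poly_similar char_poly_four_block_zeros_col[OF _ _ A3] cp unfolding blk by fastforce
  moreover have "char_poly (mat 1 1 (\<lambda>_. e)) = [:-e, 1:]"
    by (simp add: char_poly_defs det_def sign_def)
  ultimately show ?thesis by (metis mult_cancel_left pCons_eq_0_iff zero_neq_one)
qed

lemma block_diag_congruence:
  fixes U B a :: "'a::comm_ring_1 mat"
  assumes U: "U \<in> carrier_mat n n" and B: "B \<in> carrier_mat n n" and a: "a \<in> carrier_mat 1 1"
  defines "F \<equiv> four_block_mat (1\<^sub>m 1) (0\<^sub>m 1 n) (0\<^sub>m n 1) U"
  shows "transpose_mat F * four_block_mat a (0\<^sub>m 1 n) (0\<^sub>m n 1) B * F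
    = four_block_mat a (0\<^sub>m 1 n) (0\<^sub>m n 1) (transpose_mat U * B * U)"
proof -
  have "transpose_mat F = four_block_mat (1\<^sub>m 1) (0\<^sub>m 1 n) (0\<^sub>m n 1) (transpose_mat U)"
    unfolding F_def using U by (subst transpose_four_block_mat) auto
  then have "transpose_mat F * four_block_mat a (0\<^sub>m 1 n) (0\<^sub>m n 1) B
      = four_block_mat a (0\<^sub>m 1 n) (0\<^sub>m n 1) (transpose_mat U * B)"
    using U B a by (simp add: mult_four_block_mat[of _ 1 1 _ n _ n _ _ 1 _ n])
  then show ?thesis
    unfolding F_def using U B a by (simp add: mult_four_block_mat[of _ 1 1 _ n _ n _ _ 1 _ n])
qed

lemma is_orthogonal_mat_block_diag:
  fixes U :: "'a::comm_ring_1 mat"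
  assumes U: "is_orthogonal_mat n U"
  shows "is_orthogonal_mat (Suc n) (four_block_mat (1\<^sub>m 1) (0\<^sub>m 1 n) (0\<^sub>m n 1) U)"
proof -
  define F where "F = four_block_mat (1\<^sub>m 1) (0\<^sub>m 1 n) (0\<^sub>m n 1) U"
  have Uc: "U \<in> carrier_mat n n" using U unfolding is_orthogonal_mat_def by simp
  have Fc: "F \<in> carrier_mat (Suc n) (Suc n)" unfolding F_def using Uc by auto
  have one: "four_block_mat (1\<^sub>m 1) (0\<^sub>m 1 n) (0\<^sub>m n 1) (1\<^sub>m n) = 1\<^sub>m (Suc n)"
    using four_block_one_mat[of 1 n] by simp
  have "transpose_mat F * F = transpose_mat F * 1\<^sub>m (Suc n) * F" using Fc by simp
  also have "\<dots> = 1\<^sub>m (Suc n)"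
    unfolding one[symmetric] F_def block_diag_congruence[OF Uc one_carrier_mat one_carrier_mat]
    using U Uc unfolding is_orthogonal_mat_def by (simp add: one)
  finally show ?thesis using Fc unfolding is_orthogonal_mat_def F_def by simp
qed

lemma symmetric_mat_orthogonal_diagonalization:
  fixes A :: "real mat"
  assumes "A \<in> carrier_mat n n" "transpose_mat A = A" "char_poly A = (\<Prod>e\<leftarrow>es. [:-e, 1:])"
  shows "\<exists>U. is_orthogonal_mat n U \<and> transpose_mat U * A * U = mat_diag n (\<lambda>i. es ! i)"
  using assms
proof (induction es arbitrary: n A)
  case Nil
  then have "n = 0" using degree_monic_char_poly[OF Nil(1)] by simp
  then show ?case
    using Nil(1) by (intro exI[of _ "1\<^sub>m 0"]) (auto simp: is_orthogonal_mat_def mat_diag_def intro!: eq_matI)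
next
  case (Cons e es n A)
  have A: "A \<in> carrier_mat n n" "transpose_mat A = A" using Cons.prems by auto
  define n1 where "n1 = length es"
  have n: "n = Suc n1"
    using degree_monic_char_poly[OF A(1)] Cons.prems(3) degree_linear_factors[of uminus "e # es"]
    by (simp add: n1_def)
  have "eigenvalue A e"
    unfolding eigenvalue_root_char_poly[OF A(1)] Cons.prems(3) by simp
  then obtain W where W: "is_orthogonal_mat n W" and eig: "A *\<^sub>v col W 0 = e \<cdot>\<^sub>v col W 0"
    using orthogonal_mat_eigenvector_col_exists[OF A(1)] by blast
  have Wc: "W \<in> carrier_mat n n" using W unfolding is_orthogonal_mat_def by simp
  have "col (transpose_mat W * A * W) 0 = e \<cdot>\<^sub>v unit_vec n 0"
    using col_orthogonal_congruence_eigenvector[OF A(1) W _ eig] n by simp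
  moreover have "transpose_mat (transpose_mat W * A * W) = transpose_mat W * A * W"
    using transpose_congruence[OF Wc A(1)] A(2) by simp
  ultimately obtain A3 where A3: "A3 \<in> carrier_mat n1 n1" "transpose_mat A3 = A3"
    and blk: "transpose_mat W * A * W = four_block_mat (mat 1 1 (\<lambda>_. e)) (0\<^sub>m 1 n1) (0\<^sub>m n1 1) A3"
    using symmetric_mat_first_col_block[of "transpose_mat W * A * W" n1] Wc A(1) unfolding n by auto
  have "char_poly A3 = (\<Prod>e\<leftarrow>es. [:-e, 1:])"
    using char_poly_deflated_block[OF A(1) W A3(1) blk] Cons.prems(3) by simp
  then obtain U3 where U3: "is_orthogonal_mat n1 U3"
    and U3_diag: "transpose_mat U3 * A3 * U3 = mat_diag n1 (\<lambda>i. es ! i)"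
    using Cons.IH A3 by blast
  have U3c: "U3 \<in> carrier_mat n1 n1" using U3 unfolding is_orthogonal_mat_def by simp
  define F where "F = four_block_mat (1\<^sub>m 1) (0\<^sub>m 1 n1) (0\<^sub>m n1 1) U3"
  have F: "is_orthogonal_mat n F" unfolding F_def n by (rule is_orthogonal_mat_block_diag[OF U3])
  have Fc: "F \<in> carrier_mat n n" using F unfolding is_orthogonal_mat_def by simp
  have "transpose_mat (W * F) * A * (W * F) = transpose_mat F * (transpose_mat W * A * W) * F"
    using Wc Fc A(1) by (simp add: transpose_mult assoc_mult_mat[of _ n n _ n _ n])
  also have "\<dots> = four_block_mat (mat 1 1 (\<lambda>_. e)) (0\<^sub>m 1 n1) (0\<^sub>m n1 1) (mat_diag n1 (\<lambda>i. es ! i))"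
    unfolding blk F_def block_diag_congruence[OF U3c A3(1) mat_carrier] U3_diag ..
  also have "\<dots> = mat_diag n (\<lambda>i. (e # es) ! i)"
    unfolding n by (rule eq_matI) (auto simp: mat_diag_def nth_Cons split: nat.splits)
  finally show ?case using is_orthogonal_mat_mult[OF W F] by blast
qed

lemma mat_trace_mult_orthogonal_diag:
  fixes X S U :: "'a::field mat"
  assumes U: "is_orthogonal_mat n U" and X: "X \<in> carrier_mat n n" and S: "S \<in> carrier_mat n n"
    and D: "transpose_mat U * S * U = mat_diag n f"
  shows "mat_trace (X * S) = (\<Sum>i<n. (transpose_mat U * X * U) $$ (i,i) * f i)"
proof -
  have Uc: "U \<in> carrier_mat n n" using U unfolding is_orthogonal_mat_def by simp
  have UUt: "U * (transpose_mat U * Y) = Y" if "Y \<in> carrier_mat n n" for Y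
    using that Uc is_orthogonal_mat_right_inverse[OF U] by (simp flip: assoc_mult_mat[of _ n n])
  have "mat_trace (X * S) = mat_trace (transpose_mat U * (X * S) * U)"
    using mat_trace_conjugate_orthogonal[OF mult_carrier_mat[OF X S] Uc
      is_orthogonal_mat_right_inverse[OF U]] by simp
  also have "transpose_mat U * (X * S) * U = (transpose_mat U * X * U) * mat_diag n f"
    unfolding D[symmetric] using Uc X S UUt by (simp add: assoc_mult_mat[of _ n n _ n _ n])
  finally show ?thesis using Uc X by (simp add: mat_trace_mult_mat_diag)
qed

lemma gram_mat_diagonalization_nonneg:
  fixes B U :: "real mat"
  assumes B: "B \<in> carrier_mat m n" and U: "is_orthogonal_mat n U"
    and diag: "transpose_mat U * (transpose_mat B * B) * U = mat_diag n f" and i: "i < n"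
  shows "0 \<le> f i"
proof -
  have Uc: "U \<in> carrier_mat n n" using U unfolding is_orthogonal_mat_def by simp
  have "transpose_mat (B * U) * (B * U) = mat_diag n f"
    unfolding diag[symmetric] using B Uc
    by (simp add: transpose_mult assoc_mult_mat[of "transpose_mat U" n n _ n U n]
      assoc_mult_mat[of "transpose_mat B" n m B n U n] assoc_mult_mat[of "transpose_mat U" n n _ m _ n])
  then have "f i = (\<Sum>k<m. ((B * U) $$ (k,i))\<^sup>2)"
    using B Uc i by (auto simp: mat_diag_def scalar_prod_def power2_eq_square lessThan_atLeast0
      dest!: arg_cong[where f = "\<lambda>M. M $$ (i,i)"] intro!: sum.cong)
  then show ?thesis by (simp add: sum_nonneg)
qed

section \<open>Approximation by matrices of rank at most r\<close>

lemma tail_sum_le_weighted_sum: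
  fixes mu c :: "nat \<Rightarrow> real" and n r :: nat
  assumes mono: "\<And>i j. i \<le> j \<Longrightarrow> j < n \<Longrightarrow> mu j \<le> mu i"
    and nonneg: "\<And>i. i < n \<Longrightarrow> 0 \<le> mu i"
    and c01: "\<And>i. i < n \<Longrightarrow> 0 \<le> c i \<and> c i \<le> 1"
    and csum: "(\<Sum>i<n. c i) \<le> real r"
  shows "(\<Sum>i=r..<n. mu i) \<le> (\<Sum>i<n. mu i * (1 - c i))"
proof (cases "n \<le> r")
  case True
  have "0 \<le> (\<Sum>i<n. mu i * (1 - c i))"
    by (rule sum_nonneg) (use nonneg c01 in auto)
  then show ?thesis using True by simp
next
  case False
  define t where "t = mu r"
  have split: "{..<n} = {..<r} \<union> {r..<n}" "{..<r} \<inter> {r..<n} = {}" using False by auto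
  have t: "0 \<le> t" using nonneg False t_def by auto
  have "(\<Sum>i=r..<n. c i) \<le> (\<Sum>i<r. 1 - c i)"
    using csum by (simp add: split sum.union_disjoint sum_subtractf)
  \<comment> \<open>t separates the two ranges of mu, and the weight above r is paid for by the weight missing below r\<close>
  have "(\<Sum>i=r..<n. mu i * c i) \<le> (\<Sum>i=r..<n. t * c i)"
    by (rule sum_mono) (use mono c01 t_def in \<open>auto intro!: mult_right_mono\<close>)
  also have "\<dots> = t * (\<Sum>i=r..<n. c i)" by (simp add: sum_distrib_left)
  also have "\<dots> \<le> t * (\<Sum>i<r. 1 - c i)" by (rule mult_left_mono) fact+
  also have "\<dots> = (\<Sum>i<r. t * (1 - c i))" by (simp add: sum_distrib_left)
  also have "\<dots> \<le> (\<Sum>i<r. mu i * (1 - c i))"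
    by (rule sum_mono) (use mono c01 t_def False in \<open>auto intro!: mult_right_mono\<close>)
  finally have "(\<Sum>i=r..<n. mu i * c i) \<le> (\<Sum>i<r. mu i * (1 - c i))" .
  then show ?thesis
    by (simp add: split sum.union_disjoint algebra_simps sum_subtractf)
qed

lemma sum_list_drop_eq_sum:
  "sum_list (drop r xs) = (\<Sum>i=r..<length xs. xs ! i)"
proof (cases "r \<le> length xs")
  case True
  have "sum_list (drop r xs) = (\<Sum>i=0..<length xs - r. xs ! (r + i))"
    by (simp add: sum_list_sum_nth)
  also have "\<dots> = (\<Sum>i=r..<length xs. xs ! i)"
    by (rule sum.reindex_bij_witness[of _ "\<lambda>i. i - r" "\<lambda>i. r + i"]) (use True in auto)
  finally show ?thesis .
qed simp

lemma tail_eigenvalues_le_trace_complement: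
  fixes B P :: "real mat"
  assumes B: "B \<in> carrier_mat m n" and mu: "eigenvalues_desc (transpose_mat B * B) mu"
    and P: "is_orth_proj n P" and trP: "mat_trace P \<le> r"
  shows "sum_list (drop r mu) \<le> mat_trace ((1\<^sub>m n - P) * (transpose_mat B * B))"
proof -
  define S where "S = transpose_mat B * B"
  have S: "S \<in> carrier_mat n n" "transpose_mat S = S"
    unfolding S_def using B by (auto simp: transpose_mult[of _ n m])
  have len: "length mu = n" and sorted: "sorted_wrt (\<ge>) mu"
    and cp: "char_poly S = (\<Prod>m\<leftarrow>mu. [:-m, 1:])"
    using mu B unfolding eigenvalues_desc_def S_def by auto
  obtain U where U: "is_orthogonal_mat n U" and D: "transpose_mat U * S * U = mat_diag n (\<lambda>i. mu ! i)"
    using symmetric_mat_orthogonal_diagonalization[OF S cp] by blast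
  have Uc: "U \<in> carrier_mat n n" and Pc: "P \<in> carrier_mat n n"
    using U P unfolding is_orthogonal_mat_def is_orth_proj_def by auto
  define Q where "Q = transpose_mat U * P * U"
  have Q: "is_orth_proj n Q" unfolding Q_def by (rule is_orth_proj_congruence[OF P U])
  have Qc: "Q \<in> carrier_mat n n" using Q unfolding is_orth_proj_def by simp
  have "mat_trace ((1\<^sub>m n - P) * S) = (\<Sum>i<n. (1\<^sub>m n - Q) $$ (i,i) * mu ! i)"
    using mat_trace_mult_orthogonal_diag[OF U minus_carrier_mat[OF Pc] S(1) D]
      orthogonal_congruence_complement[OF U Pc] by (simp add: Q_def)
  also have "\<dots> = (\<Sum>i<n. (1 - Q $$ (i,i)) * mu ! i)"
    using Qc by (auto intro!: sum.cong)
  finally have "mat_trace ((1\<^sub>m n - P) * S) = (\<Sum>i<n. (1 - Q $$ (i,i)) * mu ! i)" .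
  moreover have "(\<Sum>i=r..<n. mu ! i) \<le> (\<Sum>i<n. mu ! i * (1 - Q $$ (i,i)))"
  proof (rule tail_sum_le_weighted_sum)
    show "mu ! j \<le> mu ! i" if "i \<le> j" "j < n" for i j
      using sorted that len by (cases "i = j") (auto simp: sorted_wrt_iff_nth_less)
    show "0 \<le> mu ! i" if "i < n" for i
      using gram_mat_diagonalization_nonneg[OF B U D[unfolded S_def] that] .
    show "0 \<le> Q $$ (i,i) \<and> Q $$ (i,i) \<le> 1" if "i < n" for i
      using is_orth_proj_diag_bounds[OF Q that] .
    show "(\<Sum>i<n. Q $$ (i,i)) \<le> real r"
      using trP mat_trace_conjugate_orthogonal[OF Pc Uc is_orthogonal_mat_right_inverse[OF U]] Qc Pc
      unfolding Q_def[symmetric] mat_trace_def by simp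
  qed
  ultimately show ?thesis
    using len by (simp add: S_def sum_list_drop_eq_sum mult.commute)
qed

lemma residual_trace_ge_projected:
  fixes B R Q P :: "real mat"
  assumes B: "B \<in> carrier_mat m n" and R: "R \<in> carrier_mat m r" and Q: "Q \<in> carrier_mat r n"
    and P: "is_orth_proj n P" and QP: "Q * P = Q"
  shows "mat_trace ((1\<^sub>m n - P) * (transpose_mat B * B))
    \<le> mat_trace ((B - R * Q) * transpose_mat (B - R * Q))"
proof -
  define X where "X = B - R * Q"
  define M where "M = 1\<^sub>m n - P"
  have Pc: "P \<in> carrier_mat n n" using P unfolding is_orth_proj_def by simp
  have M: "is_orth_proj n M" unfolding M_def by (rule is_orth_proj_complement[OF P])
  have Mc: "M \<in> carrier_mat n n" using M unfolding is_orth_proj_def by simp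
  have Xc: "X \<in> carrier_mat m n" unfolding X_def using minus_carrier_mat[OF mult_carrier_mat[OF R Q]] .
  \<comment> \<open>the rows of R Q lie in the range of P, so the residual agrees with B on its complement\<close>
  have "Q * M = 0\<^sub>m r n"
    unfolding M_def using Q Pc QP by (simp add: mult_minus_distrib_mat[OF Q one_carrier_mat Pc])
  then have XM: "X * M = B * M"
    unfolding X_def using B R Q Mc
    by (simp add: minus_mult_distrib_mat[of _ m n] assoc_mult_mat) (auto intro!: eq_matI)
  have "mat_trace (X * transpose_mat X)
      = mat_trace ((X * P) * transpose_mat (X * P)) + mat_trace ((B * M) * transpose_mat (B * M))"
    unfolding orth_proj_pythagoras[OF P Xc] M_def[symmetric] XM
    by (rule mat_trace_add[of _ m]) (use Xc Pc B Mc in auto)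
  moreover have "mat_trace ((B * M) * transpose_mat (B * M)) = mat_trace (M * (transpose_mat B * B))"
    using B Mc by (simp add: orth_proj_gram_eq[OF M B] mat_trace_mult_comm[of B m n]
      assoc_mult_mat[of _ m n _ n _ m] assoc_mult_mat[of _ n n _ m _ n])
  ultimately show ?thesis
    using mat_trace_mult_transpose_nonneg[of "X * P" m n] Xc Pc
    unfolding X_def M_def by simp
qed

lemma low_rank_residual_lower_bound:
  fixes B R Q :: "real mat"
  assumes B: "B \<in> carrier_mat m n" and R: "R \<in> carrier_mat m r" and Q: "Q \<in> carrier_mat r n"
    and mu: "eigenvalues_desc (transpose_mat B * B) mu"
  shows "sum_list (drop r mu) \<le> mat_trace ((B - R * Q) * transpose_mat (B - R * Q))"
proof -
  have "set (rows Q) \<subseteq> carrier_vec n" using Q by (auto simp: rows_def)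
  then obtain P where P: "is_orth_proj n P" and fixes_rows: "\<forall>v\<in>set (rows Q). P *\<^sub>v v = v"
    and trP: "mat_trace P \<le> length (rows Q)"
    using orth_proj_fixing_vectors_exists by blast
  have Pc: "P \<in> carrier_mat n n" and sym: "transpose_mat P = P"
    using P unfolding is_orth_proj_def by auto
  have "Q * P = Q"
  proof (rule eq_matI)
    fix k j assume "k < dim_row Q" "j < dim_col Q"
    then have k: "k < r" and j: "j < n" using Q by auto
    have "(Q * P) $$ (k,j) = row P j \<bullet> row Q k"
      using k j Q Pc sym row_transpose[of j P] by (simp add: comm_scalar_prod[of _ n])
    also have "\<dots> = (P *\<^sub>v row Q k) $ j" using Pc j by simp
    also have "\<dots> = Q $$ (k,j)" using fixes_rows k j Q by (simp add: rows_def)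
    finally show "(Q * P) $$ (k,j) = Q $$ (k,j)" .
  qed (use Q Pc in auto)
  moreover have "mat_trace P \<le> r" using trP Q by simp
  ultimately show ?thesis
    using tail_eigenvalues_le_trace_complement[OF B mu P] residual_trace_ge_projected[OF B R Q P]
    by fastforce
qed

section \<open>Expected task loss\<close>

lemma integral_sq_norm_mult_vec:
  fixes M :: "'w measure" and x :: "'w \<Rightarrow> real vec" and G S :: "real mat"
  assumes x_dim: "\<And>\<omega>. \<omega> \<in> space M \<Longrightarrow> x \<omega> \<in> carrier_vec n"
    and x_int: "\<And>i j. i < n \<Longrightarrow> j < n \<Longrightarrow> integrable M (\<lambda>\<omega>. x \<omega> $ i * x \<omega> $ j)"
    and G: "G \<in> carrier_mat m n" and S: "S \<in> carrier_mat n n"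
    and S_moments: "\<And>i j. i < n \<Longrightarrow> j < n \<Longrightarrow> S $$ (i,j) = integral\<^sup>L M (\<lambda>\<omega>. x \<omega> $ i * x \<omega> $ j)"
  shows "integral\<^sup>L M (\<lambda>\<omega>. sq_norm_vec (G *\<^sub>v x \<omega>)) = mat_trace (G * S * transpose_mat G)"
proof -
  have "sq_norm_vec (G *\<^sub>v x \<omega>) = (\<Sum>k<m. \<Sum>i<n. \<Sum>j<n. G $$ (k,i) * G $$ (k,j) * (x \<omega> $ i * x \<omega> $ j))"
    if "\<omega> \<in> space M" for \<omega>
  proof -
    have "sq_norm_vec (G *\<^sub>v x \<omega>) = (\<Sum>k<m. (\<Sum>i<n. G $$ (k,i) * x \<omega> $ i) * (\<Sum>j<n. G $$ (k,j) * x \<omega> $ j))"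
      using G x_dim[OF that] by (auto simp: sq_norm_vec_def scalar_prod_def lessThan_atLeast0 intro!: sum.cong)
    then show ?thesis by (simp add: sum_product mult_ac)
  qed
  then have "integral\<^sup>L M (\<lambda>\<omega>. sq_norm_vec (G *\<^sub>v x \<omega>))
      = integral\<^sup>L M (\<lambda>\<omega>. \<Sum>k<m. \<Sum>i<n. \<Sum>j<n. G $$ (k,i) * G $$ (k,j) * (x \<omega> $ i * x \<omega> $ j))"
    by (intro Bochner_Integration.integral_cong) auto
  also have "\<dots> = (\<Sum>k<m. \<Sum>i<n. \<Sum>j<n. G $$ (k,i) * G $$ (k,j) * integral\<^sup>L M (\<lambda>\<omega>. x \<omega> $ i * x \<omega> $ j))"
  proof -
    have int: "integrable M (\<lambda>\<omega>. x \<omega> $ i * x \<omega> $ j)" if "i \<in> {..<n}" "j \<in> {..<n}" for i j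
      using x_int that by simp
    have inner: "integral\<^sup>L M (\<lambda>\<omega>. \<Sum>j<n. c j * (x \<omega> $ i * x \<omega> $ j))
        = (\<Sum>j<n. c j * integral\<^sup>L M (\<lambda>\<omega>. x \<omega> $ i * x \<omega> $ j))" if "i \<in> {..<n}" for i c
      by (subst Bochner_Integration.integral_sum) (use int that in auto)
    have "integral\<^sup>L M (\<lambda>\<omega>. \<Sum>i<n. \<Sum>j<n. c i j * (x \<omega> $ i * x \<omega> $ j))
        = (\<Sum>i<n. \<Sum>j<n. c i j * integral\<^sup>L M (\<lambda>\<omega>. x \<omega> $ i * x \<omega> $ j))" for c
      by (subst Bochner_Integration.integral_sum) (use int inner in auto)
    then show ?thesis
      by (subst Bochner_Integration.integral_sum) (auto intro!: integrable_sum integrable_mult_right int)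
  qed
  also have "\<dots> = mat_trace (G * S * transpose_mat G)"
    using S_moments by (simp add: mat_trace_congruence_sum[OF G S])
  finally show ?thesis .
qed

lemma task_loss_lower_bound:
  fixes M :: "'w measure" and x y :: "'w \<Rightarrow> real vec" and K D C L S :: "real mat"
  assumes x_dim: "\<And>\<omega>. \<omega> \<in> space M \<Longrightarrow> x \<omega> \<in> carrier_vec n"
    and x_int: "\<And>i j. i < n \<Longrightarrow> j < n \<Longrightarrow> integrable M (\<lambda>\<omega>. x \<omega> $ i * x \<omega> $ j)"
    and S: "S \<in> carrier_mat n n"
    and S_moments: "\<And>i j. i < n \<Longrightarrow> j < n \<Longrightarrow> S $$ (i,j) = integral\<^sup>L M (\<lambda>\<omega>. x \<omega> $ i * x \<omega> $ j)"
    and L: "L \<in> carrier_mat n n" and SL: "S = L * transpose_mat L"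
    and K: "K \<in> carrier_mat k n" and D: "D \<in> carrier_mat n r" and C: "C \<in> carrier_mat r n"
    and mu: "eigenvalues_desc (transpose_mat L * transpose_mat K * K * L) mu"
    and y: "\<And>\<omega>. \<omega> \<in> space M \<Longrightarrow> y \<omega> = C *\<^sub>v x \<omega>"
  shows "sum_list (drop r mu) \<le> integral\<^sup>L M (\<lambda>\<omega>. sq_norm_vec (K *\<^sub>v x \<omega> - K *\<^sub>v (D *\<^sub>v y \<omega>)))"
proof -
  define G where "G = K - K * D * C"
  have KD: "K * D \<in> carrier_mat k r" using K D by simp
  have G: "G \<in> carrier_mat k n" unfolding G_def using minus_carrier_mat[OF mult_carrier_mat[OF KD C]] .
  have "K *\<^sub>v x \<omega> - K *\<^sub>v (D *\<^sub>v y \<omega>) = G *\<^sub>v x \<omega>" if "\<omega> \<in> space M" for \<omega>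
  proof -
    have "G *\<^sub>v x \<omega> = K *\<^sub>v x \<omega> - (K * D * C) *\<^sub>v x \<omega>"
      unfolding G_def by (rule minus_mult_distrib_mat_vec[OF K mult_carrier_mat[OF KD C] x_dim[OF that]])
    then show ?thesis using x_dim[OF that] K D C mult_carrier_mat[OF D C] unfolding y[OF that] by simp
  qed
  then have "integral\<^sup>L M (\<lambda>\<omega>. sq_norm_vec (K *\<^sub>v x \<omega> - K *\<^sub>v (D *\<^sub>v y \<omega>)))
      = integral\<^sup>L M (\<lambda>\<omega>. sq_norm_vec (G *\<^sub>v x \<omega>))"
    by (intro Bochner_Integration.integral_cong) auto
  also have "\<dots> = mat_trace (G * S * transpose_mat G)"
    by (rule integral_sq_norm_mult_vec[OF x_dim x_int G S S_moments])
  also have "G * S * transpose_mat G = (G * L) * transpose_mat (G * L)"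
    unfolding SL using G L
    by (simp add: transpose_mult[OF G L] assoc_mult_mat[of _ k n _ n _ k] assoc_mult_mat[of _ n n _ n _ k])
  also have "G * L = K * L - (K * D) * (C * L)"
    unfolding G_def using K KD C L by (simp add: minus_mult_distrib_mat[of _ k n])
  finally have loss: "integral\<^sup>L M (\<lambda>\<omega>. sq_norm_vec (K *\<^sub>v x \<omega> - K *\<^sub>v (D *\<^sub>v y \<omega>)))
      = mat_trace ((K * L - (K * D) * (C * L)) * transpose_mat (K * L - (K * D) * (C * L)))" .
  have "transpose_mat (K * L) * (K * L) = transpose_mat L * transpose_mat K * K * L"
    using K L by (simp add: transpose_mult[OF K L] assoc_mult_mat[of _ n k _ n _ n]
      assoc_mult_mat[of _ n n _ k _ n] assoc_mult_mat[of _ n k _ k _ n] assoc_mult_mat[of _ n n _ n _ n])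
  then show ?thesis
    unfolding loss using low_rank_residual_lower_bound[of "K * L" k n "K * D" r "C * L" mu] K L KD C mu
    by simp
qed

section \<open>The coding scheme is linear in the source\<close>

definition select_mat :: "nat \<Rightarrow> nat \<Rightarrow> nat \<Rightarrow> real mat" where
  "select_mat k off n = mat k n (\<lambda>(i,j). if j = off + i then 1 else 0)"

lemma select_mat_carrier [simp]: "select_mat k off n \<in> carrier_mat k n"
  by (simp add: select_mat_def)

lemma select_mat_mult_vec:
  assumes v: "v \<in> carrier_vec n" and le: "off + k \<le> n"
  shows "select_mat k off n *\<^sub>v v = vec k (\<lambda>i. v $ (off + i))"
proof (rule eq_vecI)
  fix i assume "i < dim_vec (vec k (\<lambda>i. v $ (off + i)))"
  then have "i < k" "off + i < n" using le by auto
  then show "(select_mat k off n *\<^sub>v v) $ i = vec k (\<lambda>i. v $ (off + i)) $ i"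
    using v by (simp add: select_mat_def scalar_prod_def if_distrib[of "\<lambda>t. t * _"] sum.delta'
      cong: if_cong)
qed (simp add: select_mat_def)

lemma first_part_eq_mult_vec: "a \<le> n \<Longrightarrow> v \<in> carrier_vec n \<Longrightarrow> first_part a v = select_mat a 0 n *\<^sub>v v"
  by (simp add: select_mat_mult_vec first_part_def)

lemma last_part_eq_mult_vec: "b \<le> n \<Longrightarrow> v \<in> carrier_vec n \<Longrightarrow> last_part n b v = select_mat b (n - b) n *\<^sub>v v"
  by (simp add: select_mat_mult_vec last_part_def)

lemma append_rows_mult_vec:
  fixes A S C :: "'a::comm_semiring_0 mat"
  assumes "A \<in> carrier_mat p k" "S \<in> carrier_mat k n" "C \<in> carrier_mat q n" "v \<in> carrier_vec n"
  shows "(A *\<^sub>v (S *\<^sub>v v)) @\<^sub>v (C *\<^sub>v v) = ((A * S) @\<^sub>r C) *\<^sub>v v"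
  using assms by (simp add: mat_mult_append[of _ p n _ q])

lemma relay_eq_mult_vec:
  assumes "a \<le> n" "b \<le> n" "v \<in> carrier_vec n"
    and "E15 \<in> carrier_mat p a" "E25 \<in> carrier_mat q b" "E56 \<in> carrier_mat k (p + q)"
  shows "phi56 E15 E25 E56 (first_part a v) (last_part n b v)
    = (E56 * ((E15 * select_mat a 0 n) @\<^sub>r (E25 * select_mat b (n - b) n))) *\<^sub>v v"
proof -
  let ?S1 = "select_mat a 0 n" and ?S2 = "select_mat b (n - b) n"
  have S1: "E15 * ?S1 \<in> carrier_mat p n" and S2: "E25 * ?S2 \<in> carrier_mat q n"
    using assms by auto
  have "first_part a v = ?S1 *\<^sub>v v" "last_part n b v = ?S2 *\<^sub>v v"
    using assms by (simp_all add: first_part_eq_mult_vec last_part_eq_mult_vec)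
  then have "(E15 *\<^sub>v first_part a v) @\<^sub>v (E25 *\<^sub>v last_part n b v) = ((E15 * ?S1) @\<^sub>r (E25 * ?S2)) *\<^sub>v v"
    using assms by (simp add: mat_mult_append[OF S1 S2] assoc_mult_mat_vec[of E15 p a ?S1 n v]
      assoc_mult_mat_vec[of E25 q b ?S2 n v])
  then show ?thesis
    unfolding phi56_def
    using assoc_mult_mat_vec[OF assms(6) carrier_append_rows[OF S1 S2] assms(3)] by simp
qed

theorem mainTheorem2:
  fixes M :: "'w measure" and x :: "'w \<Rightarrow> real vec"
    and n a b Z m3 m4 :: nat
    and Psi L K3 K4 E13 E15 E24 E25 E56 D3 D4 :: "real mat"
    and mu3 mu4 :: "real list"
  assumes prob: "prob_space M"
    and dims: "0 < n" "0 < a" "0 < b" "0 < Z" "max a b \<le> n" "n \<le> a + b" "Z \<le> n"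
    and x_dim: "\<And>\<omega>. \<omega> \<in> space M \<Longrightarrow> x \<omega> \<in> carrier_vec n"
    and x_meas: "\<And>i. i < n \<Longrightarrow> (\<lambda>\<omega>. x \<omega> $ i) \<in> borel_measurable M"
    and x_sq_int: "\<And>i j. i < n \<Longrightarrow> j < n \<Longrightarrow> integrable M (\<lambda>\<omega>. x \<omega> $ i * x \<omega> $ j)"
    and x_mean: "\<And>i. i < n \<Longrightarrow> prob_space.expectation M (\<lambda>\<omega>. x \<omega> $ i) = 0"
    and Psi_dim: "Psi \<in> carrier_mat n n"
    and Psi_cov: "\<And>i j. i < n \<Longrightarrow> j < n \<Longrightarrow>
                    Psi $$ (i,j) = prob_space.expectation M (\<lambda>\<omega>. x \<omega> $ i * x \<omega> $ j)"
    and Psi_pd: "pos_def_mat Psi"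
    and L_dim: "L \<in> carrier_mat n n"
    and L_chol: "lower_tri_pos_diag L" "Psi = L * transpose_mat L"
    and K3_dim: "K3 \<in> carrier_mat m3 n" and K4_dim: "K4 \<in> carrier_mat m4 n"
    and E_dims: "E13 \<in> carrier_mat Z a" "E15 \<in> carrier_mat Z a"
                "E24 \<in> carrier_mat Z b" "E25 \<in> carrier_mat Z b"
                "E56 \<in> carrier_mat Z (2 * Z)"
    and D_dims: "D3 \<in> carrier_mat n (2 * Z)" "D4 \<in> carrier_mat n (2 * Z)"
    and mu3: "eigenvalues_desc (transpose_mat L * transpose_mat K3 * K3 * L) mu3"
    and mu4: "eigenvalues_desc (transpose_mat L * transpose_mat K4 * K4 * L) mu4"
  shows "prob_space.expectation M (\<lambda>\<omega>.
            sq_norm_vec (K3 *\<^sub>v x \<omega> - K3 *\<^sub>v (D3 *\<^sub>v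
              ((E13 *\<^sub>v first_part a (x \<omega>)) @\<^sub>v
               phi56 E15 E25 E56 (first_part a (x \<omega>)) (last_part n b (x \<omega>))))))
       + prob_space.expectation M (\<lambda>\<omega>.
            sq_norm_vec (K4 *\<^sub>v x \<omega> - K4 *\<^sub>v (D4 *\<^sub>v
              ((E24 *\<^sub>v last_part n b (x \<omega>)) @\<^sub>v
               phi56 E15 E25 E56 (first_part a (x \<omega>)) (last_part n b (x \<omega>))))))
       \<ge> sum_list (drop (2 * Z) mu3) + sum_list (drop (2 * Z) mu4)"
proof -
  let ?S1 = "select_mat a 0 n" and ?S2 = "select_mat b (n - b) n"
  define C5 where "C5 = E56 * ((E15 * ?S1) @\<^sub>r (E25 * ?S2))"
  have E56: "E56 \<in> carrier_mat Z (Z + Z)" using E_dims(5) by (simp add: mult_2)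
  then have C5: "C5 \<in> carrier_mat Z n" unfolding C5_def using E_dims by auto
  have "Z + Z = 2 * Z" by simp
  then have C3: "(E13 * ?S1) @\<^sub>r C5 \<in> carrier_mat (2 * Z) n"
    and C4: "(E24 * ?S2) @\<^sub>r C5 \<in> carrier_mat (2 * Z) n"
    using E_dims C5 by (metis carrier_append_rows mult_carrier_mat select_mat_carrier)+
  have ab: "a \<le> n" "b \<le> n" using dims(5) by auto
  have "(E13 *\<^sub>v first_part a (x \<omega>)) @\<^sub>v phi56 E15 E25 E56 (first_part a (x \<omega>)) (last_part n b (x \<omega>))
      = ((E13 * ?S1) @\<^sub>r C5) *\<^sub>v x \<omega>"
    and "(E24 *\<^sub>v last_part n b (x \<omega>)) @\<^sub>v phi56 E15 E25 E56 (first_part a (x \<omega>)) (last_part n b (x \<omega>))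
      = ((E24 * ?S2) @\<^sub>r C5) *\<^sub>v x \<omega>" if "\<omega> \<in> space M" for \<omega>
    using x_dim[OF that] relay_eq_mult_vec[OF ab x_dim[OF that] E_dims(2,4) E56]
      first_part_eq_mult_vec[OF ab(1) x_dim[OF that]] last_part_eq_mult_vec[OF ab(2) x_dim[OF that]]
      append_rows_mult_vec[OF E_dims(1) select_mat_carrier C5] append_rows_mult_vec[OF E_dims(3) select_mat_carrier C5]
    unfolding C5_def by simp_all
  then show ?thesis
    using task_loss_lower_bound[OF x_dim x_sq_int Psi_dim Psi_cov L_dim L_chol(2) K3_dim D_dims(1) C3 mu3]
      task_loss_lower_bound[OF x_dim x_sq_int Psi_dim Psi_cov L_dim L_chol(2) K4_dim D_dims(2) C4 mu4]
    by (simp add: add_mono)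
qed

end
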